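(* Let $G$ be a finite group and suppose $G$ has a subgroup $H$ admitting a nontrivial homomorphism $\phi: H \to \{\pm 1\}$. Suppose further that there is a set $T$ of representatives of the left cosets of $H$ in $G$ such that $c^2 = 1$ for all $c \in T$. Then there is a function $f: G \to \{\pm 1\}$ with $\mathbb{E}_{x\in G} f(x) = 0$ and \[ \Pr_{x,y}\,[f(x)f(y) = f(xy)] \ge \frac{1}{2}\left(1 + \frac{|H|}{|G|}\right), \] where $x,y$ are chosen uniformly and independently from $G$.
   Context: $\mathbb{E}$ denotes the average over the uniform distribution on $G$. *)

theory Defs
  imports "HOL-Algebra.Algebra"
begin

end

theory Submission
  imports Defs
begin

text \<open>Write every element as \<open>t \<otimes> h\<close> with \<open>t \<in> T\<close>, \<open>h \<in> H\<close>, and extend \<open>\<phi>\<close> by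
  \<open>t \<otimes> h \<mapsto> \<phi> h\<close>. Multiply the extension by independent random signs on the non-trivial
  left cosets of \<open>H\<close>. Then \<open>f x * f y * f (x \<otimes> y)\<close> averages to zero unless the cosets of
  \<open>x\<close>, \<open>y\<close> and \<open>x \<otimes> y\<close> cancel in pairs. Pairs with \<open>y \<in> H\<close> contribute exactly \<open>|G| |H|\<close>.
  Pairs with \<open>x \<in> H\<close>, and pairs with \<open>x \<otimes> y \<in> H\<close>, contribute sums of the \<open>\<plusminus>1\<close>-character
  \<open>h \<mapsto> \<phi> h * \<phi> (inv g \<otimes> h \<otimes> g)\<close> over the subgroup \<open>H \<inter> g H g\<inverse>\<close>, which are
  non-negative; for the latter \<open>g \<in> T\<close>, and \<open>t \<otimes> t = \<one>\<close> is what turns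
  \<open>(t \<otimes> h) \<otimes> (t \<otimes> h)\<close> into \<open>(inv t \<otimes> h \<otimes> t) \<otimes> h\<close>. So for some choice of signs the
  total over all pairs is at least \<open>|G| |H|\<close>, i.e. at least \<open>(|G|\<^sup>2 + |G| |H|) / 2\<close> pairs
  agree. Right multiplication by an \<open>h\<close> with \<open>\<phi> h = -1\<close> negates \<open>f\<close>, so \<open>f\<close> is balanced.\<close>

lemma sum_eq_0_if_bij_negates:
  fixes f :: "'a \<Rightarrow> 'b::linordered_ab_group_add"
  assumes "bij_betw g A A" and "\<And>x. x \<in> A \<Longrightarrow> f (g x) = - f x"
  shows "sum f A = 0"
proof -
  have "sum f A = sum (\<lambda>x. f (g x)) A"
    using sum.reindex_bij_betw[OF assms(1), of f] by simp
  also have "\<dots> = - sum f A"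
    by (simp add: assms(2) sum_negf)
  finally show ?thesis
    by simp
qed

lemma ex_ge_if_sum_ge:
  fixes F :: "'a \<Rightarrow> 'b::linordered_semidom"
  assumes "finite S" "S \<noteq> {}" "of_nat (card S) * c \<le> sum F S"
  shows "\<exists>s\<in>S. c \<le> F s"
proof (rule ccontr)
  assume "\<not> ?thesis"
  then have "sum F S < sum (\<lambda>_. c) S"
    using sum_strict_mono[OF assms(1,2), of F "\<lambda>_. c"] by (simp add: not_le)
  also have "\<dots> = of_nat (card S) * c"
    by (rule sum_constant)
  finally show False
    using assms(3) by (simp add: not_le[symmetric])
qed

lemma sum_sign_products_eq_agreements:
  fixes f :: "'a \<Rightarrow> int"
  assumes "finite A" and "\<And>x. x \<in> A \<Longrightarrow> f x \<in> {1, -1}"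
    and "\<And>x y. x \<in> A \<Longrightarrow> y \<in> A \<Longrightarrow> m x y \<in> A"
  shows "(\<Sum>x\<in>A. \<Sum>y\<in>A. f x * f y * f (m x y))
     = 2 * int (card {(x, y). x \<in> A \<and> y \<in> A \<and> f x * f y = f (m x y)}) - int (card A) ^ 2"
proof -
  define agree where "agree p \<longleftrightarrow> f (fst p) * f (snd p) = f (m (fst p) (snd p))" for p
  have "f x * f y * f (m x y) = 2 * of_bool (agree (x, y)) - 1" if "x \<in> A" "y \<in> A" for x y
    using assms(2)[of x] assms(2)[of y] assms(2)[OF assms(3)[OF that]] that
    unfolding agree_def by auto
  then have "(\<Sum>x\<in>A. \<Sum>y\<in>A. f x * f y * f (m x y)) = (\<Sum>p\<in>A \<times> A. 2 * of_bool (agree p) - 1)"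
    by (simp add: sum.cartesian_product)
  also have "\<dots> = 2 * int (card {p \<in> A \<times> A. agree p}) - int (card (A \<times> A))"
    using assms(1) by (simp add: sum_subtractf sum_distrib_left[symmetric] sum.If_cases Int_def)
  also have "{p \<in> A \<times> A. agree p} = {(x, y). x \<in> A \<and> y \<in> A \<and> f x * f y = f (m x y)}"
    unfolding agree_def by auto
  finally show ?thesis
    by (simp add: card_cartesian_product power2_eq_square)
qed

text \<open>Summing over these is averaging over independent uniform signs on \<open>C - {c\<^sub>0}\<close>.\<close>

definition sign_patterns :: "'c set \<Rightarrow> 'c \<Rightarrow> ('c \<Rightarrow> int) set" where
  "sign_patterns C c\<^sub>0 = {\<sigma> \<in> C \<rightarrow>\<^sub>E {1, -1}. \<sigma> c\<^sub>0 = 1}"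

lemma sum_sign_patterns_triple:
  fixes C :: "'c set"
  assumes "u \<in> C" "v \<in> C" "w \<in> C"
  shows "(\<Sum>\<sigma>\<in>sign_patterns C c\<^sub>0. \<sigma> u * \<sigma> v * \<sigma> w) =
    (if (u = c\<^sub>0 \<and> v = w) \<or> (v = c\<^sub>0 \<and> u = w) \<or> (w = c\<^sub>0 \<and> u = v)
     then int (card (sign_patterns C c\<^sub>0)) else 0)"
proof (cases "(u = c\<^sub>0 \<and> v = w) \<or> (v = c\<^sub>0 \<and> u = w) \<or> (w = c\<^sub>0 \<and> u = v)")
  case True
  have "\<sigma> u * \<sigma> v * \<sigma> w = 1" if "\<sigma> \<in> sign_patterns C c\<^sub>0" for \<sigma>
    using that True assms unfolding sign_patterns_def by (auto simp: PiE_iff)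
  then show ?thesis
    using True by simp
next
  case False
  define parity where "parity a = (if u = a then -1 else 1) * (if v = a then -1 else 1) *
    (if w = a then -1 else (1::int))" for a
  have "\<exists>a\<in>{u, v, w}. a \<noteq> c\<^sub>0 \<and> parity a = -1"
    using False unfolding parity_def by auto
  then obtain a where a: "a \<in> C" "a \<noteq> c\<^sub>0" "parity a = -1"
    using assms by blast
  have flip: "(\<sigma>(a := - \<sigma> a)) b = (if b = a then -1 else 1) * \<sigma> b" for \<sigma> :: "'c \<Rightarrow> int" and b
    by simp
  have "(\<Sum>\<sigma>\<in>sign_patterns C c\<^sub>0. \<sigma> u * \<sigma> v * \<sigma> w) = 0"
  proof (rule sum_eq_0_if_bij_negates)
    show "bij_betw (\<lambda>\<sigma>. \<sigma>(a := - \<sigma> a)) (sign_patterns C c\<^sub>0) (sign_patterns C c\<^sub>0)"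
      by (rule bij_betwI[where g = "\<lambda>\<sigma>. \<sigma>(a := - \<sigma> a)"])
        (use a in \<open>fastforce simp: sign_patterns_def PiE_iff extensional_def\<close>)+
    show "(\<sigma>(a := - \<sigma> a)) u * (\<sigma>(a := - \<sigma> a)) v * (\<sigma>(a := - \<sigma> a)) w = - (\<sigma> u * \<sigma> v * \<sigma> w)"
      for \<sigma> :: "'c \<Rightarrow> int"
    proof -
      have "(\<sigma>(a := - \<sigma> a)) u * (\<sigma>(a := - \<sigma> a)) v * (\<sigma>(a := - \<sigma> a)) w
          = parity a * (\<sigma> u * \<sigma> v * \<sigma> w)"
        unfolding flip parity_def by (simp only: mult_ac)
      then show ?thesis
        using a(3) by simp
    qed
  qed
  then show ?thesis
    by (simp only: if_not_P[OF False])
qed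

lemma (in group) character_sum_nonneg:
  fixes \<psi> :: "'a \<Rightarrow> int"
  assumes "subgroup K G" and "\<And>k. k \<in> K \<Longrightarrow> \<psi> k \<in> {1, -1}"
    and "\<And>k l. k \<in> K \<Longrightarrow> l \<in> K \<Longrightarrow> \<psi> (k \<otimes> l) = \<psi> k * \<psi> l"
  shows "0 \<le> sum \<psi> K"
proof (cases "\<exists>k\<in>K. \<psi> k = -1")
  case True
  interpret K: subgroup K G by fact
  obtain k where k: "k \<in> K" "\<psi> k = -1"
    using True by blast
  have "sum \<psi> K = 0"
  proof (rule sum_eq_0_if_bij_negates)
    show "bij_betw (\<lambda>h. k \<otimes> h) K K"
      by (rule bij_betwI[where g = "\<lambda>h. inv k \<otimes> h"])
        (use k in \<open>simp_all add: K.mem_carrier m_assoc[symmetric] Pi_iff\<close>)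
    show "\<psi> (k \<otimes> h) = - \<psi> h" if "h \<in> K" for h
      using assms(3) k that by simp
  qed
  then show ?thesis
    by simp
next
  case False
  then show ?thesis
    using assms(2) by (intro sum_nonneg) force
qed

lemma (in group) conj_mult:
  assumes "g \<in> carrier G" "a \<in> carrier G" "b \<in> carrier G"
  shows "inv g \<otimes> (a \<otimes> b) \<otimes> g = (inv g \<otimes> a \<otimes> g) \<otimes> (inv g \<otimes> b \<otimes> g)"
proof -
  have "(inv g \<otimes> a \<otimes> g) \<otimes> (inv g \<otimes> b \<otimes> g) = inv g \<otimes> a \<otimes> (g \<otimes> inv g) \<otimes> b \<otimes> g"
    using assms by (simp only: m_assoc inv_closed m_closed)
  then show ?thesis
    using assms by (simp add: m_assoc)
qed

lemma (in group) conj_inv: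
  "\<lbrakk>g \<in> carrier G; a \<in> carrier G\<rbrakk> \<Longrightarrow> inv (inv g \<otimes> a \<otimes> g) = inv g \<otimes> inv a \<otimes> g"
  by (simp add: inv_mult_group m_assoc)

lemma (in group) subgroup_conj_preimage:
  assumes "subgroup H G" "g \<in> carrier G"
  shows "subgroup {h \<in> H. inv g \<otimes> h \<otimes> g \<in> H} G"
proof -
  interpret H: subgroup H G by fact
  show ?thesis
  proof (rule subgroupI)
    have "\<one> \<in> {h \<in> H. inv g \<otimes> h \<otimes> g \<in> H}"
      using assms(2) by simp
    then show "{h \<in> H. inv g \<otimes> h \<otimes> g \<in> H} \<noteq> {}"
      by blast
    show "inv a \<in> {h \<in> H. inv g \<otimes> h \<otimes> g \<in> H}" if "a \<in> {h \<in> H. inv g \<otimes> h \<otimes> g \<in> H}" for a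
      using that assms(2) conj_inv[of g a] H.m_inv_closed[of "inv g \<otimes> a \<otimes> g"]
      by (auto simp: H.mem_carrier)
    show "a \<otimes> b \<in> {h \<in> H. inv g \<otimes> h \<otimes> g \<in> H}"
      if "a \<in> {h \<in> H. inv g \<otimes> h \<otimes> g \<in> H}" "b \<in> {h \<in> H. inv g \<otimes> h \<otimes> g \<in> H}" for a b
      using that assms(2) conj_mult[of g a b] by (auto simp: H.mem_carrier)
  qed (use H.subset in blast)
qed

lemma (in group) lcosets_eq: "lcosets H = {x <# H | x. x \<in> carrier G}"
  unfolding LCOSETS_def by blast

locale sign_character = group G for G (structure) +
  fixes H :: "'a set" and \<phi> :: "'a \<Rightarrow> int"
  assumes subgroup_H: "subgroup H G"
    and character_sign: "h \<in> H \<Longrightarrow> \<phi> h \<in> {1, -1}"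
    and character_mult: "h \<in> H \<Longrightarrow> k \<in> H \<Longrightarrow> \<phi> (h \<otimes> k) = \<phi> h * \<phi> k"
begin

sublocale H: subgroup H G
  by (rule subgroup_H)

lemma character_square: "h \<in> H \<Longrightarrow> \<phi> h * \<phi> h = 1"
  using character_sign by fastforce

lemma conj_character_sum_nonneg:
  assumes "g \<in> carrier G"
  shows "0 \<le> (\<Sum>h\<in>{h \<in> H. inv g \<otimes> h \<otimes> g \<in> H}. \<phi> h * \<phi> (inv g \<otimes> h \<otimes> g))"
proof (rule character_sum_nonneg[OF subgroup_conj_preimage[OF subgroup_H assms]])
  show "\<phi> k * \<phi> (inv g \<otimes> k \<otimes> g) \<in> {1, -1}" if "k \<in> {h \<in> H. inv g \<otimes> h \<otimes> g \<in> H}" for k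
    using that character_sign[of k] character_sign[of "inv g \<otimes> k \<otimes> g"] by auto
  show "\<phi> (k \<otimes> l) * \<phi> (inv g \<otimes> (k \<otimes> l) \<otimes> g) = \<phi> k * \<phi> (inv g \<otimes> k \<otimes> g) * (\<phi> l * \<phi> (inv g \<otimes> l \<otimes> g))"
    if "k \<in> {h \<in> H. inv g \<otimes> h \<otimes> g \<in> H}" "l \<in> {h \<in> H. inv g \<otimes> h \<otimes> g \<in> H}" for k l
    using that assms by (simp add: conj_mult H.mem_carrier character_mult)
qed

lemma lcos_eq_iff:
  assumes "a \<in> carrier G" "b \<in> carrier G"
  shows "a <# H = b <# H \<longleftrightarrow> inv a \<otimes> b \<in> H"
proof
  assume "a <# H = b <# H"
  then have "b \<in> a <# H"
    using lcos_self[OF assms(2) subgroup_H] by simp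
  then show "inv a \<otimes> b \<in> H"
    by (rule H.lcos_module_imp[OF is_group assms(1)])
next
  assume "inv a \<otimes> b \<in> H"
  then have "b \<in> a <# H"
    by (rule H.lcos_module_rev[OF is_group assms])
  then show "a <# H = b <# H"
    by (rule l_repr_independence[OF _ assms(1) subgroup_H])
qed

lemma lcos_eq_H_iff: "x \<in> carrier G \<Longrightarrow> x <# H = H \<longleftrightarrow> x \<in> H"
  using lcos_eq_iff[of \<one> x] lcos_mult_one[OF H.subset] by auto

lemma lcos_mult_right: "x \<in> carrier G \<Longrightarrow> k \<in> H \<Longrightarrow> (x \<otimes> k) <# H = x <# H"
  using lcos_eq_iff[of x "x \<otimes> k"] by (simp add: H.mem_carrier m_assoc[symmetric])

lemma mult_right_mem_H_iff: "a \<in> carrier G \<Longrightarrow> h \<in> H \<Longrightarrow> a \<otimes> h \<in> H \<longleftrightarrow> a \<in> H"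
  using lcos_eq_H_iff[of a] lcos_eq_H_iff[of "a \<otimes> h"] lcos_mult_right[of a h] by (simp add: H.mem_carrier)

lemma lcos_in_lcosets: "x \<in> carrier G \<Longrightarrow> x <# H \<in> lcosets H"
  unfolding LCOSETS_def by blast

end

locale coset_transversal = sign_character +
  fixes T :: "'a set"
  assumes transversal_subset: "T \<subseteq> carrier G"
    and transversal_bij: "bij_betw (\<lambda>t. t <# H) T (lcosets H)"
begin

definition transversal_rep :: "'a \<Rightarrow> 'a" where
  "transversal_rep x = the_inv_into T (\<lambda>t. t <# H) (x <# H)"

lemma transversal_rep:
  assumes "x \<in> carrier G"
  shows "transversal_rep x \<in> T" and "transversal_rep x <# H = x <# H"
proof -
  have inj: "inj_on (\<lambda>t. t <# H) T"
    using transversal_bij by (rule bij_betw_imp_inj_on)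
  have "x <# H \<in> (\<lambda>t. t <# H) ` T"
    using bij_betw_imp_surj_on[OF transversal_bij] lcos_in_lcosets[OF assms] by simp
  then show "transversal_rep x \<in> T" "transversal_rep x <# H = x <# H"
    unfolding transversal_rep_def using the_inv_into_into[OF inj] f_the_inv_into_f[OF inj] by auto
qed

lemma transversal_rep_carrier: "x \<in> carrier G \<Longrightarrow> transversal_rep x \<in> carrier G"
  using transversal_rep(1) transversal_subset by blast

lemma transversal_rep_mult_right:
  "x \<in> carrier G \<Longrightarrow> k \<in> H \<Longrightarrow> transversal_rep (x \<otimes> k) = transversal_rep x"
  unfolding transversal_rep_def by (simp add: lcos_mult_right)

lemma transversal_rep_quotient: "x \<in> carrier G \<Longrightarrow> inv (transversal_rep x) \<otimes> x \<in> H"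
  using lcos_eq_iff transversal_rep transversal_rep_carrier by blast

lemma bij_betw_transversal_times:
  "bij_betw (\<lambda>(t, h). t \<otimes> h) (T \<times> H) (carrier G)"
proof (rule bij_betw_imageI)
  show "inj_on (\<lambda>(t, h). t \<otimes> h) (T \<times> H)"
  proof (rule inj_onI, clarify)
    fix t h t' h' assume th: "t \<in> T" "h \<in> H" "t' \<in> T" "h' \<in> H" and eq: "t \<otimes> h = t' \<otimes> h'"
    have carr: "t \<in> carrier G" "t' \<in> carrier G"
      using th(1,3) transversal_subset by auto
    have "t <# H = t' <# H"
      using lcos_mult_right[OF carr(1) th(2)] lcos_mult_right[OF carr(2) th(4)] eq by simp
    then have "t = t'"
      using inj_onD[OF bij_betw_imp_inj_on[OF transversal_bij]] th(1,3) by blast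
    then show "t = t' \<and> h = h'"
      using eq carr th(2,4) by (simp add: H.mem_carrier)
  qed
  show "(\<lambda>(t, h). t \<otimes> h) ` (T \<times> H) = carrier G"
  proof
    show "(\<lambda>(t, h). t \<otimes> h) ` (T \<times> H) \<subseteq> carrier G"
      using transversal_subset by (auto simp: H.mem_carrier)
    show "carrier G \<subseteq> (\<lambda>(t, h). t \<otimes> h) ` (T \<times> H)"
    proof
      fix x assume x: "x \<in> carrier G"
      have "transversal_rep x \<in> carrier G"
        using x by (rule transversal_rep_carrier)
      then have "x = transversal_rep x \<otimes> (inv (transversal_rep x) \<otimes> x)"
        using x by (simp add: m_assoc[symmetric])
      moreover have "(transversal_rep x, inv (transversal_rep x) \<otimes> x) \<in> T \<times> H"
        using x transversal_rep(1) transversal_rep_quotient by simp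
      ultimately show "x \<in> (\<lambda>(t, h). t \<otimes> h) ` (T \<times> H)"
        by (metis (no_types, lifting) case_prod_conv image_eqI)
    qed
  qed
qed

text \<open>On \<open>H\<close> itself the extension is \<open>\<phi>\<close>, even though the representative of \<open>H\<close> in \<open>T\<close>
  need not be \<open>\<one>\<close>.\<close>

definition char_ext :: "'a \<Rightarrow> int" where
  "char_ext x = (if x \<in> H then \<phi> x else \<phi> (inv (transversal_rep x) \<otimes> x))"

lemma char_ext_sign: "x \<in> carrier G \<Longrightarrow> char_ext x \<in> {1, -1}"
  unfolding char_ext_def using character_sign transversal_rep_quotient by auto

lemma char_ext_square: "x \<in> carrier G \<Longrightarrow> char_ext x * char_ext x = 1"
  using char_ext_sign by fastforce

lemma char_ext_H: "h \<in> H \<Longrightarrow> char_ext h = \<phi> h"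
  by (simp add: char_ext_def)

lemma char_ext_mult_right:
  assumes "x \<in> carrier G" "k \<in> H"
  shows "char_ext (x \<otimes> k) = char_ext x * \<phi> k"
proof (cases "x \<in> H")
  case True
  then show ?thesis
    using assms(2) by (simp add: char_ext_def character_mult)
next
  case False
  have "x \<otimes> k \<notin> H"
    using False assms by (simp add: mult_right_mem_H_iff)
  moreover have "inv (transversal_rep x) \<otimes> (x \<otimes> k) = (inv (transversal_rep x) \<otimes> x) \<otimes> k"
    using assms transversal_rep_carrier by (simp add: H.mem_carrier m_assoc)
  ultimately show ?thesis
    using False assms transversal_rep_quotient
    by (simp add: char_ext_def transversal_rep_mult_right character_mult)
qed

end

locale involutive_transversal = coset_transversal +
  assumes finite_carrier: "finite (carrier G)"
    and transversal_involution: "t \<in> T \<Longrightarrow> t \<otimes> t = \<one>"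
begin

lemma finite_H: "finite H"
  by (rule finite_subset[OF H.subset finite_carrier])

definition correlation :: "('a \<Rightarrow> int) \<Rightarrow> int" where
  "correlation f = (\<Sum>x\<in>carrier G. \<Sum>y\<in>carrier G. f x * f y * f (x \<otimes> y))"

definition twist :: "('a set \<Rightarrow> int) \<Rightarrow> 'a \<Rightarrow> int" where
  "twist \<sigma> x = \<sigma> (x <# H) * char_ext x"

definition ext_triple :: "'a \<Rightarrow> 'a \<Rightarrow> int" where
  "ext_triple x y = char_ext x * char_ext y * char_ext (x \<otimes> y)"

definition cosets_cancel :: "'a \<Rightarrow> 'a \<Rightarrow> bool" where
  "cosets_cancel x y \<longleftrightarrow> (x \<in> H \<and> y <# H = (x \<otimes> y) <# H) \<or> (y \<in> H \<and> x <# H = (x \<otimes> y) <# H)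
     \<or> (x \<otimes> y \<in> H \<and> x <# H = y <# H)"

lemma twist_sign:
  "\<sigma> \<in> sign_patterns (lcosets H) H \<Longrightarrow> x \<in> carrier G \<Longrightarrow> twist \<sigma> x \<in> {1, -1}"
  using char_ext_sign[of x] lcos_in_lcosets[of x]
  by (auto simp: twist_def sign_patterns_def PiE_iff)

lemma sum_twist_eq_0:
  assumes "\<sigma> \<in> sign_patterns (lcosets H) H" "h \<in> H" "\<phi> h = -1"
  shows "(\<Sum>x\<in>carrier G. twist \<sigma> x) = 0"
proof (rule sum_eq_0_if_bij_negates)
  show "bij_betw (\<lambda>x. x \<otimes> h) (carrier G) (carrier G)"
    by (rule bij_betwI[where g = "\<lambda>x. x \<otimes> inv h"])
      (use assms(2) in \<open>simp_all add: H.mem_carrier m_assoc Pi_iff\<close>)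
  show "twist \<sigma> (x \<otimes> h) = - twist \<sigma> x" if "x \<in> carrier G" for x
    using that assms(2,3) by (simp add: twist_def lcos_mult_right char_ext_mult_right)
qed

lemma sum_sign_patterns_correlation:
  "(\<Sum>\<sigma>\<in>sign_patterns (lcosets H) H. correlation (twist \<sigma>)) = int (card (sign_patterns (lcosets H) H)) *
     (\<Sum>x\<in>carrier G. \<Sum>y\<in>carrier G. if cosets_cancel x y then ext_triple x y else 0)"
proof -
  let ?S = "sign_patterns (lcosets H) H"
  have pointwise: "(\<Sum>\<sigma>\<in>?S. twist \<sigma> x * twist \<sigma> y * twist \<sigma> (x \<otimes> y))
      = int (card ?S) * (if cosets_cancel x y then ext_triple x y else 0)"
    if "x \<in> carrier G" "y \<in> carrier G" for x y
  proof -
    have "(\<Sum>\<sigma>\<in>?S. twist \<sigma> x * twist \<sigma> y * twist \<sigma> (x \<otimes> y))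
        = (\<Sum>\<sigma>\<in>?S. \<sigma> (x <# H) * \<sigma> (y <# H) * \<sigma> ((x \<otimes> y) <# H)) * ext_triple x y"
      unfolding twist_def ext_triple_def sum_distrib_right by (intro sum.cong refl) (simp only: mult_ac)
    also have "\<dots> = int (card ?S) * (if cosets_cancel x y then ext_triple x y else 0)"
      using that by (simp add: sum_sign_patterns_triple lcos_in_lcosets lcos_eq_H_iff cosets_cancel_def)
    finally show ?thesis .
  qed
  have "(\<Sum>\<sigma>\<in>?S. correlation (twist \<sigma>))
      = (\<Sum>x\<in>carrier G. \<Sum>\<sigma>\<in>?S. \<Sum>y\<in>carrier G. twist \<sigma> x * twist \<sigma> y * twist \<sigma> (x \<otimes> y))"
    unfolding correlation_def by (rule sum.swap)
  also have "\<dots> = (\<Sum>x\<in>carrier G. \<Sum>y\<in>carrier G. \<Sum>\<sigma>\<in>?S. twist \<sigma> x * twist \<sigma> y * twist \<sigma> (x \<otimes> y))"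
    by (intro sum.cong refl sum.swap)
  also have "\<dots> = int (card ?S) * (\<Sum>x\<in>carrier G. \<Sum>y\<in>carrier G. if cosets_cancel x y then ext_triple x y else 0)"
    using pointwise by (simp add: sum_distrib_left)
  finally show ?thesis .
qed

lemma cosets_cancel_iff:
  assumes x: "x \<in> carrier G" and y: "y \<in> carrier G"
  shows "cosets_cancel x y \<longleftrightarrow> y \<in> H \<or> (y \<notin> H \<and> x \<in> H \<and> inv y \<otimes> x \<otimes> y \<in> H)
    \<or> (x \<notin> H \<and> y \<notin> H \<and> x \<otimes> y \<in> H \<and> x <# H = y <# H)"
proof (cases "y \<in> H")
  case True
  then show ?thesis
    using x by (simp add: cosets_cancel_def lcos_mult_right)
next
  case y_notin: False
  show ?thesis
  proof (cases "x \<in> H")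
    case True
    have "x \<otimes> y \<notin> H"
    proof
      assume "x \<otimes> y \<in> H"
      then have "inv x \<otimes> (x \<otimes> y) \<in> H"
        using True by (simp add: H.m_closed)
      with x y y_notin show False
        by (simp add: m_assoc[symmetric])
    qed
    moreover have "y <# H = (x \<otimes> y) <# H \<longleftrightarrow> inv y \<otimes> x \<otimes> y \<in> H"
      using x y by (simp add: lcos_eq_iff m_assoc)
    ultimately show ?thesis
      using True y_notin by (auto simp: cosets_cancel_def)
  next
    case False
    then show ?thesis
      using y_notin by (auto simp: cosets_cancel_def)
  qed
qed

lemma sum_triples_right_in_H:
  "(\<Sum>x\<in>carrier G. \<Sum>y\<in>carrier G. if y \<in> H then ext_triple x y else 0) = int (card (carrier G) * card H)"
proof -
  have "(\<Sum>y\<in>carrier G. if y \<in> H then ext_triple x y else 0) = int (card H)" if x: "x \<in> carrier G" for x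
  proof -
    have "ext_triple x y = 1" if "y \<in> H" for y
    proof -
      have "ext_triple x y = (char_ext x * char_ext x) * (\<phi> y * \<phi> y)"
        using x that by (simp add: ext_triple_def char_ext_H char_ext_mult_right mult_ac)
      then show ?thesis
        using char_ext_square[OF x] character_square[OF that] by simp
    qed
    have "(\<Sum>y\<in>carrier G. if y \<in> H then ext_triple x y else 0) = (\<Sum>y\<in>{y \<in> carrier G. y \<in> H}. ext_triple x y)"
      by (rule sum.inter_filter[OF finite_carrier, symmetric])
    also have "{y \<in> carrier G. y \<in> H} = H"
      using H.subset by blast
    finally show ?thesis
      using \<open>\<And>y. y \<in> H \<Longrightarrow> ext_triple x y = 1\<close> by simp
  qed
  then show ?thesis
    by simp
qed

lemma sum_triples_left_in_H_nonneg:
  "0 \<le> (\<Sum>x\<in>carrier G. \<Sum>y\<in>carrier G. if y \<notin> H \<and> x \<in> H \<and> inv y \<otimes> x \<otimes> y \<in> H then ext_triple x y else 0)"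
proof -
  have "0 \<le> (\<Sum>x\<in>carrier G. if y \<notin> H \<and> x \<in> H \<and> inv y \<otimes> x \<otimes> y \<in> H then ext_triple x y else 0)"
    if y: "y \<in> carrier G" for y
  proof (cases "y \<in> H")
    case False
    have "ext_triple x y = \<phi> x * \<phi> (inv y \<otimes> x \<otimes> y)" if "x \<in> H" "inv y \<otimes> x \<otimes> y \<in> H" for x
    proof -
      have "x \<otimes> y = y \<otimes> (inv y \<otimes> x \<otimes> y)"
        using y that(1) by (simp add: H.mem_carrier m_assoc[symmetric])
      then have "ext_triple x y = (char_ext y * char_ext y) * (\<phi> x * \<phi> (inv y \<otimes> x \<otimes> y))"
        using y that by (simp add: ext_triple_def char_ext_H char_ext_mult_right mult_ac)
      then show ?thesis
        using char_ext_square[OF y] by simp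
    qed
    have "(\<Sum>x\<in>carrier G. if y \<notin> H \<and> x \<in> H \<and> inv y \<otimes> x \<otimes> y \<in> H then ext_triple x y else 0)
        = (\<Sum>x\<in>{x \<in> carrier G. x \<in> H \<and> inv y \<otimes> x \<otimes> y \<in> H}. ext_triple x y)"
      using False by (simp add: sum.inter_filter[OF finite_carrier])
    also have "{x \<in> carrier G. x \<in> H \<and> inv y \<otimes> x \<otimes> y \<in> H} = {x \<in> H. inv y \<otimes> x \<otimes> y \<in> H}"
      using H.subset by blast
    also have "(\<Sum>x\<in>{x \<in> H. inv y \<otimes> x \<otimes> y \<in> H}. ext_triple x y)
        = (\<Sum>x\<in>{x \<in> H. inv y \<otimes> x \<otimes> y \<in> H}. \<phi> x * \<phi> (inv y \<otimes> x \<otimes> y))"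
      using \<open>\<And>x. \<lbrakk>x \<in> H; inv y \<otimes> x \<otimes> y \<in> H\<rbrakk> \<Longrightarrow> ext_triple x y = \<phi> x * \<phi> (inv y \<otimes> x \<otimes> y)\<close>
      by (intro sum.cong) auto
    finally show ?thesis
      using conj_character_sum_nonneg[OF y] by simp
  qed simp
  then show ?thesis
    by (subst sum.swap) (rule sum_nonneg)
qed

definition square_char :: "'a \<Rightarrow> int" where
  "square_char x = (if x \<otimes> x \<in> H then \<phi> (x \<otimes> x) else 0)"

lemma ext_triple_mult_right:
  assumes x: "x \<in> carrier G" and k: "k \<in> H" and "x \<otimes> x \<in> H"
  shows "ext_triple x (x \<otimes> k) = \<phi> (x \<otimes> x)"
proof -
  have "x \<otimes> (x \<otimes> k) = (x \<otimes> x) \<otimes> k"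
    using x k by (simp add: H.mem_carrier m_assoc)
  then have "ext_triple x (x \<otimes> k) = (char_ext x * char_ext x) * (\<phi> k * \<phi> k) * \<phi> (x \<otimes> x)"
    using assms by (simp add: ext_triple_def char_ext_mult_right char_ext_H character_mult H.m_closed mult_ac)
  then show ?thesis
    using char_ext_square[OF x] character_square[OF k] by simp
qed

lemma sum_triples_product_in_H:
  assumes x: "x \<in> carrier G" and x_notin: "x \<notin> H"
  shows "(\<Sum>y\<in>carrier G. if y \<notin> H \<and> x \<otimes> y \<in> H \<and> x <# H = y <# H then ext_triple x y else 0)
    = int (card H) * square_char x"
proof -
  let ?term = "\<lambda>y. if y \<notin> H \<and> x \<otimes> y \<in> H \<and> x <# H = y <# H then ext_triple x y else 0"
  have term_coset: "?term (x \<otimes> k) = square_char x" if "k \<in> H" for k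
  proof -
    have "x \<otimes> (x \<otimes> k) = x \<otimes> x \<otimes> k"
      using x that by (simp add: H.mem_carrier m_assoc)
    then show ?thesis
      using x x_notin that
      by (simp add: mult_right_mem_H_iff lcos_mult_right square_char_def ext_triple_mult_right)
  qed
  have "sum ?term (carrier G) = sum ?term (x <# H)"
  proof (rule sum.mono_neutral_right[OF finite_carrier l_coset_subset_G[OF H.subset x]])
    show "\<forall>y\<in>carrier G - (x <# H). ?term y = 0"
    proof
      fix y assume "y \<in> carrier G - (x <# H)"
      then have "x <# H \<noteq> y <# H"
        using lcos_self[OF _ subgroup_H, of y] by blast
      then show "?term y = 0"
        by simp
    qed
  qed
  also have "\<dots> = (\<Sum>k\<in>H. ?term (x \<otimes> k))"
  proof (rule sum.reindex_bij_betw[symmetric], rule bij_betw_imageI)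
    show "inj_on (\<lambda>k. x \<otimes> k) H"
      by (rule inj_on_g'[OF H.subset x])
    show "(\<lambda>k. x \<otimes> k) ` H = x <# H"
      unfolding l_coset_def by blast
  qed
  also have "\<dots> = (\<Sum>k\<in>H. square_char x)"
    by (rule sum.cong[OF refl term_coset])
  finally show ?thesis
    by simp
qed

lemma sum_square_char_transversal_nonneg:
  assumes t: "t \<in> T"
  shows "0 \<le> (\<Sum>h\<in>H. if t \<otimes> h \<notin> H then square_char (t \<otimes> h) else 0)"
proof (cases "t \<in> H")
  case True
  then show ?thesis
    by (simp add: H.m_closed)
next
  case False
  have tc: "t \<in> carrier G"
    using t transversal_subset by blast
  have inv_t: "inv t = t"
    by (rule inv_equality[OF transversal_involution[OF t] tc tc])
  have "square_char (t \<otimes> h) = (if inv t \<otimes> h \<otimes> t \<in> H then \<phi> h * \<phi> (inv t \<otimes> h \<otimes> t) else 0)"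
    if h: "h \<in> H" for h
  proof -
    have "(t \<otimes> h) \<otimes> (t \<otimes> h) = (inv t \<otimes> h \<otimes> t) \<otimes> h"
      using tc h inv_t by (simp add: H.mem_carrier m_assoc)
    then show ?thesis
      using tc h by (simp add: square_char_def mult_right_mem_H_iff character_mult H.mem_carrier mult.commute)
  qed
  moreover have "t \<otimes> h \<notin> H" if "h \<in> H" for h
    using tc that False by (simp add: mult_right_mem_H_iff)
  ultimately have "(\<Sum>h\<in>H. if t \<otimes> h \<notin> H then square_char (t \<otimes> h) else 0)
      = (\<Sum>h\<in>H. if inv t \<otimes> h \<otimes> t \<in> H then \<phi> h * \<phi> (inv t \<otimes> h \<otimes> t) else 0)"
    by (intro sum.cong) auto
  also have "\<dots> = (\<Sum>h\<in>{h \<in> H. inv t \<otimes> h \<otimes> t \<in> H}. \<phi> h * \<phi> (inv t \<otimes> h \<otimes> t))"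
    by (rule sum.inter_filter[OF finite_H, symmetric])
  finally show ?thesis
    using conj_character_sum_nonneg[OF tc] by simp
qed

lemma sum_square_char_nonneg: "0 \<le> (\<Sum>x\<in>carrier G. if x \<notin> H then square_char x else 0)"
proof -
  let ?F = "\<lambda>x. if x \<notin> H then square_char x else 0"
  have "sum ?F (carrier G) = (\<Sum>p\<in>T \<times> H. ?F ((\<lambda>(t, h). t \<otimes> h) p))"
    by (rule sum.reindex_bij_betw[OF bij_betw_transversal_times, symmetric])
  also have "\<dots> = (\<Sum>t\<in>T. \<Sum>h\<in>H. ?F (t \<otimes> h))"
    unfolding sum.cartesian_product by (intro sum.cong) auto
  also have "0 \<le> \<dots>"
    by (rule sum_nonneg, rule sum_square_char_transversal_nonneg)
  finally show ?thesis .
qed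

lemma sum_triples_product_in_H_nonneg:
  "0 \<le> (\<Sum>x\<in>carrier G. \<Sum>y\<in>carrier G.
     if x \<notin> H \<and> y \<notin> H \<and> x \<otimes> y \<in> H \<and> x <# H = y <# H then ext_triple x y else 0)"
proof -
  have "(\<Sum>x\<in>carrier G. \<Sum>y\<in>carrier G.
      if x \<notin> H \<and> y \<notin> H \<and> x \<otimes> y \<in> H \<and> x <# H = y <# H then ext_triple x y else 0)
      = (\<Sum>x\<in>carrier G. int (card H) * (if x \<notin> H then square_char x else 0))"
    using sum_triples_product_in_H by (intro sum.cong) auto
  also have "\<dots> = int (card H) * (\<Sum>x\<in>carrier G. if x \<notin> H then square_char x else 0)"
    by (rule sum_distrib_left[symmetric])
  finally show ?thesis
    using sum_square_char_nonneg by simp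
qed

lemma sum_cancelling_triples_ge:
  "int (card (carrier G) * card H) \<le>
     (\<Sum>x\<in>carrier G. \<Sum>y\<in>carrier G. if cosets_cancel x y then ext_triple x y else 0)"
proof -
  have "(if cosets_cancel x y then ext_triple x y else 0)
      = (if y \<in> H then ext_triple x y else 0)
        + (if y \<notin> H \<and> x \<in> H \<and> inv y \<otimes> x \<otimes> y \<in> H then ext_triple x y else 0)
        + (if x \<notin> H \<and> y \<notin> H \<and> x \<otimes> y \<in> H \<and> x <# H = y <# H then ext_triple x y else 0)"
    if "x \<in> carrier G" "y \<in> carrier G" for x y
    using cosets_cancel_iff[OF that] by auto
  then have "(\<Sum>x\<in>carrier G. \<Sum>y\<in>carrier G. if cosets_cancel x y then ext_triple x y else 0)
      = (\<Sum>x\<in>carrier G. \<Sum>y\<in>carrier G. if y \<in> H then ext_triple x y else 0)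
        + (\<Sum>x\<in>carrier G. \<Sum>y\<in>carrier G. if y \<notin> H \<and> x \<in> H \<and> inv y \<otimes> x \<otimes> y \<in> H then ext_triple x y else 0)
        + (\<Sum>x\<in>carrier G. \<Sum>y\<in>carrier G.
            if x \<notin> H \<and> y \<notin> H \<and> x \<otimes> y \<in> H \<and> x <# H = y <# H then ext_triple x y else 0)"
    by (simp add: sum.distrib)
  then show ?thesis
    using sum_triples_right_in_H sum_triples_left_in_H_nonneg sum_triples_product_in_H_nonneg
    by linarith
qed

lemma ex_sign_pattern_correlation_ge:
  "\<exists>\<sigma>\<in>sign_patterns (lcosets H) H. int (card (carrier G) * card H) \<le> correlation (twist \<sigma>)"
proof (rule ex_ge_if_sum_ge)
  have "finite (lcosets H)"
    using finite_carrier lcosets_subset_PowG[OF subgroup_H] by (meson finite_Pow_iff finite_subset)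
  then show "finite (sign_patterns (lcosets H) H)"
    unfolding sign_patterns_def by (simp add: finite_PiE)
  have "H \<in> lcosets H"
    using lcos_in_lcosets[of \<one>] lcos_mult_one[OF H.subset] by simp
  then have "(\<lambda>C\<in>lcosets H. 1) \<in> sign_patterns (lcosets H) H"
    unfolding sign_patterns_def by simp
  then show "sign_patterns (lcosets H) H \<noteq> {}"
    by blast
  show "of_nat (card (sign_patterns (lcosets H) H)) * int (card (carrier G) * card H)
      \<le> (\<Sum>\<sigma>\<in>sign_patterns (lcosets H) H. correlation (twist \<sigma>))"
    unfolding sum_sign_patterns_correlation using sum_cancelling_triples_ge by (intro mult_left_mono) auto
qed

theorem ex_balanced_sign_function_correlation_ge:
  assumes "h \<in> H" "\<phi> h \<noteq> 1"
  shows "\<exists>f. (\<forall>x\<in>carrier G. f x \<in> {1, -1}) \<and> (\<Sum>x\<in>carrier G. f x) = 0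
    \<and> int (card (carrier G) * card H) \<le> correlation f"
proof -
  obtain \<sigma> where \<sigma>: "\<sigma> \<in> sign_patterns (lcosets H) H"
    and bound: "int (card (carrier G) * card H) \<le> correlation (twist \<sigma>)"
    using ex_sign_pattern_correlation_ge by blast
  have "\<phi> h = -1"
    using assms character_sign by blast
  then show ?thesis
    using twist_sign[OF \<sigma>] sum_twist_eq_0[OF \<sigma> assms(1)] bound by blast
qed

end

lemma agreement_ratio_bound:
  fixes n h a :: nat
  assumes "0 < n" and "int (n * h) \<le> 2 * int a - int n ^ 2"
  shows "1 / 2 * (1 + real h / real n) \<le> real a / real n ^ 2"
proof -
  have "real_of_int (int (n * h)) \<le> real_of_int (2 * int a - int n ^ 2)"
    using assms(2) by (simp only: of_int_le_iff)
  then have "real n * real h + real n ^ 2 \<le> 2 * real a"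
    by simp
  have "1 / 2 * (1 + real h / real n) = (real n * real h + real n ^ 2) / (2 * real n ^ 2)"
    using assms(1) by (simp add: field_simps power2_eq_square)
  also have "\<dots> \<le> 2 * real a / (2 * real n ^ 2)"
    using \<open>real n * real h + real n ^ 2 \<le> 2 * real a\<close> by (intro divide_right_mono) auto
  finally show ?thesis
    by simp
qed

theorem theorem4:
  fixes G :: "('a, 'b) monoid_scheme" (structure)
    and H :: "'a set" and \<phi> :: "'a \<Rightarrow> int" and T :: "'a set"
  assumes "group G"
    and "finite (carrier G)"
    and "subgroup H G"
    and "\<forall>h\<in>H. \<phi> h \<in> {1, -1}"
    and "\<forall>x\<in>H. \<forall>y\<in>H. \<phi> (x \<otimes> y) = \<phi> x * \<phi> y"
    and "\<exists>h\<in>H. \<phi> h \<noteq> 1"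
    and "T \<subseteq> carrier G"
    and "bij_betw (\<lambda>t. t <# H) T {x <# H | x. x \<in> carrier G}"
    and "\<forall>c\<in>T. c \<otimes> c = \<one>"
  shows "\<exists>f :: 'a \<Rightarrow> int.
           (\<forall>x\<in>carrier G. f x \<in> {1, -1}) \<and>
           (\<Sum>x\<in>carrier G. real_of_int (f x)) / real (card (carrier G)) = 0 \<and>
           real (card {(x, y). x \<in> carrier G \<and> y \<in> carrier G \<and> f x * f y = f (x \<otimes> y)})
             / real (card (carrier G)) ^ 2
           \<ge> (1 / 2) * (1 + real (card H) / real (card (carrier G)))"
proof -
  have "involutive_transversal G H \<phi> T"
    using assms by (auto simp: involutive_transversal_def involutive_transversal_axioms_def
      coset_transversal_def coset_transversal_axioms_def sign_character_def sign_character_axioms_def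
      group.lcosets_eq)
  then interpret involutive_transversal G H \<phi> T .
  obtain f where sign: "\<forall>x\<in>carrier G. f x \<in> {1, -1}" and balanced: "(\<Sum>x\<in>carrier G. f x) = 0"
    and bound: "int (card (carrier G) * card H) \<le> correlation f"
    using ex_balanced_sign_function_correlation_ge assms(6) by blast
  have "correlation f
      = 2 * int (card {(x, y). x \<in> carrier G \<and> y \<in> carrier G \<and> f x * f y = f (x \<otimes> y)}) - int (card (carrier G)) ^ 2"
    unfolding correlation_def using sign by (intro sum_sign_products_eq_agreements finite_carrier) auto
  moreover have "0 < card (carrier G)"
    using finite_carrier by (auto simp: card_gt_0_iff)
  ultimately show ?thesis
    using sign balanced bound agreement_ratio_bound by (intro exI[of _ f]) (simp flip: of_int_sum)
qed

end
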